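(* Let $E$, $P$, $C$ be sets and let $\mathsf{upd}_E : E \to E$ (environment), $\mathsf{upd}_P : P \times E \times C \to P$ (plant) and $\mathsf{upd}_C : C \times P \to C$ (controller) be functions. Let $S = E \times P \times C$ be the state space of the full system with dynamics $$\mathsf{upd}_S(e,p,c) = \big(\mathsf{upd}_E(e),\ \mathsf{upd}_P(p,e,c),\ \mathsf{upd}_C(c,p)\big).$$ Let $\tilde K \subseteq E \times P$ be a set of target states and $K = \{(e,p,c) \in S \mid (e,p) \in \tilde K\}$. Assume: (i) (Regulation condition) there is a subset $S^* \subseteq K$ which is forward invariant ($\mathsf{upd}_S(S^* ) \subseteq S^*$) and attracting: for every $s \in S$ there is $n \in \mathbb{N}$ such that $\mathsf{upd}_S^t(s) \in S^*$ for all $t \ge n$. (ii) (Autonomous attracting controller) Let $C^* = \{c \in C \mid \exists e,p,\ (e,p,c) \in S^*\}$ and $P^* = \{p \in P \mid \exists e,c,\ (e,p,c) \in S^*\}$. There is a function $g : C^* \to C^*$ such that $\mathsf{upd}_C(c,p) = g(c)$ for all $c \in C^*$, $p \in P^*$ (i.e. there is an autonomous system $\mathsf{C}^*_{\mathsf{aut}}$ with state set $C^*$ and update $g$, and the identity on states together with the trivial map on inputs is a map of systems from the restricted controller $\mathsf{upd}_C|_{C^* \times P^*}$ to $\mathsf{C}^*_{\mathsf{aut}}$). Then the autonomous system $\mathsf{C}^*_{\mathsf{aut}}$ (state set $C^*$, update $g$) models the attracting full system $\mathsf{S}^*$ (state set $S^*$, update $\mathsf{upd}_S|_{S^*}$)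 via the projection $\pi : S^* \to C^*$, $(e,p,c) \mapsto c$; that is, $\pi$ is surjective and $\pi(\mathsf{upd}_S(s)) = g(\pi(s))$ for all $s \in S^*$.
   Context: A (fully observable) system with state set $X$ and input set $I$ is a function $\mathsf{upd}: X \times I \to X$; it is autonomous if $I$ is a singleton. A map of systems from $(X, I, \mathsf{upd}_X)$ to $(X', I', \mathsf{upd}_{X'})$ consists of $f_s : X \to X'$ and $f_i : X \times I \to I'$ with $f_s(\mathsf{upd}_X(x,i)) = \mathsf{upd}_{X'}(f_s(x), f_i(x,i))$ for all $x,i$. A model of a system $\mathsf{X}$ by a system $\mathsf{M}$ is a map of systems $\mu:\mathsf{X}\to\mathsf{M}$ whose state part is surjective and whose input part $\mu_i(x,-)$ is surjective for each $x$. For autonomous systems this amounts to a surjection $\mu_s: X \to M$ with $\mu_s \circ \mathsf{upd}_X = \mathsf{upd}_M \circ \mu_s$. *)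

theory Defs
  imports Main
begin

definition updS :: "('e \<Rightarrow> 'e) \<Rightarrow> ('p \<Rightarrow> 'e \<Rightarrow> 'c \<Rightarrow> 'p) \<Rightarrow> ('c \<Rightarrow> 'p \<Rightarrow> 'c)
    \<Rightarrow> 'e \<times> 'p \<times> 'c \<Rightarrow> 'e \<times> 'p \<times> 'c" where
  "updS updE updP updC s = (case s of (e, p, c) \<Rightarrow> (updE e, updP p e c, updC c p))"

definition targetK :: "('e \<times> 'p) set \<Rightarrow> ('e \<times> 'p \<times> 'c) set" where
  "targetK Kt = {(e, p, c). (e, p) \<in> Kt}"

definition ctrl_proj :: "('e \<times> 'p \<times> 'c) set \<Rightarrow> 'c set" where
  "ctrl_proj Sst = {c. \<exists>e p. (e, p, c) \<in> Sst}"

definition plant_proj :: "('e \<times> 'p \<times> 'c) set \<Rightarrow> 'p set" where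
  "plant_proj Sst = {p. \<exists>e c. (e, p, c) \<in> Sst}"

end

theory Submission
  imports Defs
begin

lemma ctrl_proj_eq_image: "ctrl_proj S = (\<lambda>(e, p, c). c) ` S"
  unfolding ctrl_proj_def by (auto simp: image_def) force

lemma updS_ctrl_component: "(\<lambda>(e, p, c). c) (updS updE updP updC (e, p, c)) = updC c p"
  by (simp add: updS_def)

lemma ctrl_component_updS_autonomous:
  assumes "\<forall>c\<in>ctrl_proj S. \<forall>p\<in>plant_proj S. updC c p = g c"
    and "s \<in> S"
  shows "(\<lambda>(e, p, c). c) (updS updE updP updC s) = g ((\<lambda>(e, p, c). c) s)"
proof -
  obtain e p c where s: "s = (e, p, c)" by (cases s)
  have "c \<in> ctrl_proj S" "p \<in> plant_proj S"
    using \<open>s \<in> S\<close> unfolding s ctrl_proj_def plant_proj_def by auto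
  with assms(1) show ?thesis
    unfolding s updS_ctrl_component by simp
qed

theorem theorem1:
  fixes updE :: "'e \<Rightarrow> 'e" and updP :: "'p \<Rightarrow> 'e \<Rightarrow> 'c \<Rightarrow> 'p"
    and updC :: "'c \<Rightarrow> 'p \<Rightarrow> 'c"
    and Kt :: "('e \<times> 'p) set" and Sst :: "('e \<times> 'p \<times> 'c) set"
    and g :: "'c \<Rightarrow> 'c"
  assumes sub: "Sst \<subseteq> targetK Kt"
    and inv: "updS updE updP updC ` Sst \<subseteq> Sst"
    and attr: "\<forall>s. \<exists>n. \<forall>t\<ge>n. (updS updE updP updC ^^ t) s \<in> Sst"
    and g_maps: "g ` ctrl_proj Sst \<subseteq> ctrl_proj Sst"
    and g_ctrl: "\<forall>c\<in>ctrl_proj Sst. \<forall>p\<in>plant_proj Sst. updC c p = g c"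
  shows "(\<lambda>(e, p, c). c) ` Sst = ctrl_proj Sst
    \<and> (\<forall>s\<in>Sst. (\<lambda>(e, p, c). c) (updS updE updP updC s) = g ((\<lambda>(e, p, c). c) s))"
  by (simp add: ctrl_proj_eq_image ctrl_component_updS_autonomous[OF g_ctrl])

end
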